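(* In the altruistic controlled social learning model described in the context, the myopic optimal policy and the optimal policy satisfy $\pi^0_A(b)\le\pi^*_A(b)$ for all $b\in[0,1]$.
   Context: A binary state $\omega\in\{G,B\}$ is drawn once. Agents $i=1,2,\dots$ act in sequence; a planner chooses precision $q_i\in[0.5,1]$ and agent $i$ receives a private signal $s_i$ with $\mathbb{P}(s_i=\omega)=q_i$, conditionally independent given $\omega$. Let $y(b,q)=1+2bq-b-q$, $z(b,q)=b+q-2bq$. With public belief $b_i$, agent $i$ takes $a_i=s_i$ if $1-q_i\le b_i\le q_i$, $G$ if $b_i>q_i$, $B$ if $b_i<1-q_i$; the public belief becomes $\frac{q_ib_i}{y(b_i,q_i)}$ (if $s_i=G$) or $\frac{(1-q_i)b_i}{z(b_i,q_i)}$ (if $s_i=B$) when $1-q_i\le b_i\le q_i$, and stays $b_i$ otherwise. With $C>0$, baseline $p\in[0.5,1)$ and cost $\beta:[0.5,1]\to[0,\infty)$ non-negative, increasing, continuous, concave with $\beta(p)=0$, the altruistic reward is $r_A(b,q)=-\beta(q)-C\min(b,1-b,1-q)$. Policies are deterministic Markov maps $\pi:[0,1]\to[0.5,1]$; for $\delta\in[0,1)$, $V^\pi_A(b)=\mathbb{E}[\sum_{i\ge1}\delta^{i-1}r_A(b_i,\pi(b_i))\mid b_1=b]$, $V^*_A=\sup_\pi V^\pi_A$, $\pi^*_A$ is an optimal policy, and the myopic optimal policy $\pi^0_A$ satisfies $\pi^0_A(b)\in\arg\sup_{q\in[0.5,1]}r_A(b,q)$ for each $b$. *)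

theory Defs
  imports "HOL-Probability.Probability"
begin

definition y_fn :: "real \<Rightarrow> real \<Rightarrow> real" where
  "y_fn b q = 1 + 2*b*q - b - q"

definition z_fn :: "real \<Rightarrow> real \<Rightarrow> real" where
  "z_fn b q = b + q - 2*b*q"

text \<open>Public-belief update after a signal (True = G, False = B) of precision q at belief b.\<close>
definition next_belief :: "real \<Rightarrow> real \<Rightarrow> bool \<Rightarrow> real" where
  "next_belief q b s =
     (if 1 - q \<le> b \<and> b \<le> q
      then (if s then q * b / y_fn b q else (1 - q) * b / z_fn b q)
      else b)"

text \<open>One-step transition of the public belief under policy pol: the signal is G with
  probability y(b,q) = P(s = G) given public belief b.\<close>
definition step_pmf :: "(real \<Rightarrow> real) \<Rightarrow> real \<Rightarrow> real pmf" where
  "step_pmf pol b = map_pmf (next_belief (pol b) b) (bernoulli_pmf (y_fn b (pol b)))"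

text \<open>Distribution of b_{n+1} given b_1 = b.\<close>
fun belief_pmf :: "(real \<Rightarrow> real) \<Rightarrow> nat \<Rightarrow> real \<Rightarrow> real pmf" where
  "belief_pmf pol 0 b = return_pmf b"
| "belief_pmf pol (Suc n) b = bind_pmf (belief_pmf pol n b) (step_pmf pol)"

definition rA :: "(real \<Rightarrow> real) \<Rightarrow> real \<Rightarrow> real \<Rightarrow> real \<Rightarrow> real" where
  "rA \<beta> C b q = - \<beta> q - C * min b (min (1 - b) (1 - q))"

definition is_policy :: "(real \<Rightarrow> real) \<Rightarrow> bool" where
  "is_policy pol \<longleftrightarrow> (\<forall>b\<in>{0..1}. pol b \<in> {1/2..1})"

definition VA :: "(real \<Rightarrow> real) \<Rightarrow> real \<Rightarrow> real \<Rightarrow> (real \<Rightarrow> real) \<Rightarrow> real \<Rightarrow> real" where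
  "VA \<beta> C \<delta> pol b =
     (\<Sum>n. \<delta> ^ n * measure_pmf.expectation (belief_pmf pol n b) (\<lambda>x. rA \<beta> C x (pol x)))"

definition VA_star :: "(real \<Rightarrow> real) \<Rightarrow> real \<Rightarrow> real \<Rightarrow> real \<Rightarrow> real" where
  "VA_star \<beta> C \<delta> b = (SUP pol\<in>{pol. is_policy pol}. VA \<beta> C \<delta> pol b)"

definition optimal_policy :: "(real \<Rightarrow> real) \<Rightarrow> real \<Rightarrow> real \<Rightarrow> (real \<Rightarrow> real) \<Rightarrow> bool" where
  "optimal_policy \<beta> C \<delta> pol \<longleftrightarrow>
     is_policy pol \<and> (\<forall>b\<in>{0..1}. VA \<beta> C \<delta> pol b = VA_star \<beta> C \<delta> b)"

definition myopic_optimal_policy :: "(real \<Rightarrow> real) \<Rightarrow> real \<Rightarrow> (real \<Rightarrow> real) \<Rightarrow> bool" where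
  "myopic_optimal_policy \<beta> C pol \<longleftrightarrow>
     is_policy pol \<and> (\<forall>b\<in>{0..1}. \<forall>q\<in>{1/2..1}. rA \<beta> C b q \<le> rA \<beta> C b (pol b))"

end

theory Submission
  imports Defs
begin

text \<open>
  Write \<open>m = min b (1 - b)\<close>. Because \<open>\<beta>\<close> is concave and nonnegative, it lies above the chord
  from \<open>(1 - m, 0)\<close> to \<open>(1, \<beta> 1)\<close>; this makes every precision strictly between the two
  extremes worse than \<open>q = 1\<close> (reward \<open>-\<beta> 1\<close>) or \<open>q = 1/2\<close> (reward \<open>-C m\<close>), so the myopic
  policy plays \<open>q = 1\<close> exactly when \<open>\<beta> 1 < C m\<close>. Only these beliefs matter for the comparison.
  There any \<open>q < 1\<close> earns a reward strictly below \<open>-\<beta> 1\<close>, and as all rewards are nonpositive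
  the value of a policy never exceeds its first reward. On the other hand, revealing the state
  at \<open>b\<close> and staying uninformative afterwards earns exactly \<open>-\<beta> 1\<close>: the belief jumps to 0 or 1,
  where \<open>q = 1/2\<close> costs nothing. So an optimal policy must also play \<open>q = 1\<close> at \<open>b\<close>.
\<close>

lemma pmf_expectation_bounds:
  fixes g :: "'a \<Rightarrow> real"
  assumes "\<And>x. x \<in> set_pmf M \<Longrightarrow> a \<le> g x \<and> g x \<le> c"
  shows "a \<le> measure_pmf.expectation M g" and "measure_pmf.expectation M g \<le> c"
proof -
  have "integrable M g"
    by (rule measure_pmf.integrable_const_bound[where B = "max \<bar>a\<bar> \<bar>c\<bar>"])
      (auto intro!: AE_pmfI dest!: assms)
  then show "a \<le> measure_pmf.expectation M g" "measure_pmf.expectation M g \<le> c"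
    by (auto intro!: measure_pmf.integral_ge_const measure_pmf.integral_le_const AE_pmfI
        dest: assms)
qed

lemma suminf_le_head:
  fixes f :: "nat \<Rightarrow> real"
  assumes "summable f" and "\<And>n. f (Suc n) \<le> 0"
  shows "suminf f \<le> f 0"
proof -
  have "(\<Sum>n. f (Suc n)) \<le> (\<Sum>n. 0)"
    using assms by (intro suminf_le) (auto simp: summable_Suc_iff)
  then show ?thesis
    using suminf_split_head[OF assms(1)] by simp
qed

lemma concave_on_Icc_nonneg_chord:
  fixes f :: "real \<Rightarrow> real"
  assumes "concave_on {a..c} f" and "0 \<le> f a" and "q \<in> {a..c}"
  shows "(q - a) * f c \<le> (c - a) * f q"
proof (cases "a = c")
  case False
  then have "0 < c - a" using assms(3) by simp
  moreover have "(f c - f a) / (c - a) * (q - a) + f a \<le> f q"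
    using concave_onD_Icc'[OF assms(1,3)] by simp
  ultimately have "(f c - f a) * (q - a) + (c - a) * f a \<le> (c - a) * f q"
    by (simp add: field_simps)
  moreover have "0 \<le> (c - q) * f a"
    using assms(2,3) by simp
  ultimately show ?thesis by (simp add: algebra_simps)
qed (use assms(3) in simp)

lemma next_belief_in_unit:
  assumes "q \<in> {1/2..1}" and "b \<in> {0..1::real}"
  shows "next_belief q b s \<in> {0..1}"
proof -
  have y: "y_fn b q = q * b + (1 - q) * (1 - b)" by (simp add: y_fn_def algebra_simps)
  have z: "z_fn b q = (1 - q) * b + q * (1 - b)" by (simp add: z_fn_def algebra_simps)
  have "0 \<le> q * b" "0 \<le> (1 - q) * (1 - b)" "0 \<le> (1 - q) * b" "0 \<le> q * (1 - b)"
    using assms by auto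
  then have "q * b / y_fn b q \<in> {0..1}" "(1 - q) * b / z_fn b q \<in> {0..1}"
    unfolding y z by (auto simp: divide_le_eq_1)
  then show ?thesis
    using assms(2) unfolding next_belief_def by auto
qed

lemma set_belief_pmf_closed:
  assumes "set_pmf (belief_pmf pol k b) \<subseteq> S"
    and "\<And>x. x \<in> S \<Longrightarrow> set_pmf (step_pmf pol x) \<subseteq> S"
  shows "set_pmf (belief_pmf pol (k + n) b) \<subseteq> S"
proof (induction n)
  case 0
  then show ?case using assms(1) by simp
next
  case (Suc n)
  show ?case
  proof
    fix x assume "x \<in> set_pmf (belief_pmf pol (k + Suc n) b)"
    then obtain y where "y \<in> set_pmf (belief_pmf pol (k + n) b)"
      and "x \<in> set_pmf (step_pmf pol y)"
      by (auto simp: set_bind_pmf)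
    with Suc.IH assms(2) show "x \<in> S" by blast
  qed
qed

lemma set_belief_pmf_subset_unit:
  assumes "is_policy pol" and "b \<in> {0..1}"
  shows "set_pmf (belief_pmf pol n b) \<subseteq> {0..1}"
proof -
  have "set_pmf (step_pmf pol x) \<subseteq> {0..1}" if "x \<in> {0..1}" for x
    using assms(1) that next_belief_in_unit unfolding step_pmf_def is_policy_def by auto
  then show ?thesis
    using set_belief_pmf_closed[of pol 0 b "{0..1}" n] assms(2) by simp
qed

lemma rA_eq: "rA \<beta> C b q = - \<beta> q - C * min (min b (1 - b)) (1 - q)"
  by (simp add: rA_def min.assoc)

lemma rA_nonpos:
  assumes "\<forall>q\<in>{1/2..1}. 0 \<le> \<beta> q" and "0 \<le> C" and "b \<in> {0..1}" and "q \<in> {1/2..1}"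
  shows "rA \<beta> C b q \<le> 0"
proof -
  have "0 \<le> \<beta> q" and "0 \<le> C * min b (min (1 - b) (1 - q))"
    using assms by auto
  then show ?thesis unfolding rA_def by linarith
qed

lemma rA_lower_bound:
  assumes "mono_on {1/2..1} \<beta>" and "0 \<le> C" and "b \<in> {0..1}" and "q \<in> {1/2..1}"
  shows "- \<beta> 1 - C \<le> rA \<beta> C b q"
proof -
  have "\<beta> q \<le> \<beta> 1" using assms(1,4) by (auto intro: mono_onD)
  moreover have "C * min b (min (1 - b) (1 - q)) \<le> C"
    using assms(2-4) by (auto intro: mult_left_le)
  ultimately show ?thesis unfolding rA_def by linarith
qed

lemma expected_reward_bounds:
  assumes "\<forall>q\<in>{1/2..1}. 0 \<le> \<beta> q" and "mono_on {1/2..1} \<beta>" and "0 \<le> C"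
    and "is_policy pol" and "b \<in> {0..1}"
  shows "- \<beta> 1 - C \<le> measure_pmf.expectation (belief_pmf pol n b) (\<lambda>x. rA \<beta> C x (pol x))"
    and "measure_pmf.expectation (belief_pmf pol n b) (\<lambda>x. rA \<beta> C x (pol x)) \<le> 0"
proof -
  have "- \<beta> 1 - C \<le> rA \<beta> C x (pol x) \<and> rA \<beta> C x (pol x) \<le> 0"
    if "x \<in> set_pmf (belief_pmf pol n b)" for x
  proof -
    have "x \<in> {0..1}"
      using that set_belief_pmf_subset_unit[OF assms(4,5)] by blast
    moreover from this have "pol x \<in> {1/2..1}"
      using assms(4) by (simp add: is_policy_def)
    ultimately
    show ?thesis using assms(1-3) rA_lower_bound rA_nonpos by blast
  qed
  then show "- \<beta> 1 - C \<le> measure_pmf.expectation (belief_pmf pol n b) (\<lambda>x. rA \<beta> C x (pol x))"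
    and "measure_pmf.expectation (belief_pmf pol n b) (\<lambda>x. rA \<beta> C x (pol x)) \<le> 0"
    by (auto intro!: pmf_expectation_bounds)
qed

lemma VA_le_first_reward:
  assumes "\<forall>q\<in>{1/2..1}. 0 \<le> \<beta> q" and "mono_on {1/2..1} \<beta>" and "0 \<le> C"
    and "is_policy pol" and "b \<in> {0..1}" and "0 \<le> \<delta>" and "\<delta> < 1"
  shows "VA \<beta> C \<delta> pol b \<le> rA \<beta> C b (pol b)"
proof -
  define E where "E n = measure_pmf.expectation (belief_pmf pol n b) (\<lambda>x. rA \<beta> C x (pol x))" for n
  note E_bounds = expected_reward_bounds[OF assms(1-5), folded E_def]
  have "norm (\<delta> ^ n * E n) \<le> \<delta> ^ n * (\<beta> 1 + C)" for n
  proof -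
    have "\<bar>E n\<bar> \<le> \<beta> 1 + C" using E_bounds[of n] by linarith
    then show ?thesis using assms(6) by (simp add: abs_mult mult_left_mono)
  qed
  moreover have "summable (\<lambda>n. \<delta> ^ n * (\<beta> 1 + C))"
    using assms(6,7) by (intro summable_mult2 summable_geometric) auto
  ultimately have "summable (\<lambda>n. \<delta> ^ n * E n)"
    by (rule summable_comparison_test'[where N = 0, rotated])
  then have "(\<Sum>n. \<delta> ^ n * E n) \<le> \<delta> ^ 0 * E 0"
    by (rule suminf_le_head) (use E_bounds assms(6) in \<open>auto intro: mult_nonneg_nonpos\<close>)
  then show ?thesis by (simp add: VA_def E_def)
qed

lemma VA_nonpos:
  assumes "\<forall>q\<in>{1/2..1}. 0 \<le> \<beta> q" and "mono_on {1/2..1} \<beta>" and "0 \<le> C"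
    and "is_policy pol" and "b \<in> {0..1}" and "0 \<le> \<delta>" and "\<delta> < 1"
  shows "VA \<beta> C \<delta> pol b \<le> 0"
  using VA_le_first_reward[OF assms] rA_nonpos[OF assms(1,3,5)] assms(4,5)
  by (force simp: is_policy_def)

definition reveal_policy :: "real \<Rightarrow> real \<Rightarrow> real" where
  "reveal_policy b = (\<lambda>x. if x = b then 1 else 1/2)"

lemma is_policy_reveal_policy: "is_policy (reveal_policy b)"
  by (simp add: is_policy_def reveal_policy_def)

lemma set_belief_pmf_reveal_policy:
  assumes "0 < b" and "b < 1"
  shows "set_pmf (belief_pmf (reveal_policy b) (Suc n) b) \<subseteq> {0, 1}"
proof -
  have "next_belief 1 b s \<in> {0, 1}" for s
    using assms unfolding next_belief_def y_fn_def z_fn_def by auto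
  then have "set_pmf (belief_pmf (reveal_policy b) 1 b) \<subseteq> {0, 1}"
    by (auto simp: step_pmf_def reveal_policy_def)
  moreover have "set_pmf (step_pmf (reveal_policy b) x) \<subseteq> {0, 1}" if "x \<in> {0, 1}" for x
  proof -
    have uninformative: "reveal_policy b x = 1/2"
      using that assms by (auto simp: reveal_policy_def)
    have "next_belief (1/2) x s = x" for s
      using that unfolding next_belief_def by auto
    then show ?thesis
      using that unfolding step_pmf_def uninformative by auto
  qed
  ultimately show ?thesis
    using set_belief_pmf_closed[of "reveal_policy b" 1 b "{0, 1}" n] by (simp only: plus_1_eq_Suc)
qed

lemma rA_reveal_policy_absorbing:
  assumes "x \<in> {0, 1}" and "x \<noteq> b" and "\<beta> (1/2) = 0"
  shows "rA \<beta> C x (reveal_policy b x) = 0"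
proof -
  have uninformative: "reveal_policy b x = 1/2"
    using assms(2) by (simp add: reveal_policy_def)
  have "min x (min (1 - x) (1 - 1/2)) = 0"
    using assms(1) by auto
  then show ?thesis
    unfolding rA_def uninformative assms(3) by simp
qed

lemma VA_reveal_policy:
  assumes "0 < b" and "b < 1" and "\<beta> (1/2) = 0"
  shows "VA \<beta> C \<delta> (reveal_policy b) b = - \<beta> 1"
proof -
  define E where "E n = measure_pmf.expectation (belief_pmf (reveal_policy b) n b)
    (\<lambda>x. rA \<beta> C x (reveal_policy b x))" for n
  have "E (Suc n) = 0" for n
    unfolding E_def
  proof (rule integral_eq_zero_AE, rule AE_pmfI)
    fix x assume "x \<in> set_pmf (belief_pmf (reveal_policy b) (Suc n) b)"
    then have "x \<in> {0, 1}"
      using set_belief_pmf_reveal_policy[OF assms(1,2)] by blast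
    moreover have "x \<noteq> b"
      using calculation assms(1,2) by auto
    ultimately show "rA \<beta> C x (reveal_policy b x) = 0"
      using assms(3) by (rule rA_reveal_policy_absorbing)
  qed
  moreover have "E 0 = - \<beta> 1"
    using assms(1,2) by (simp add: E_def reveal_policy_def rA_def)
  ultimately have "(\<lambda>n. \<delta> ^ n * E n) = (\<lambda>n. if n = 0 then - \<beta> 1 else 0)"
    by (auto simp: fun_eq_iff gr0_conv_Suc)
  then have "(\<lambda>n. \<delta> ^ n * E n) sums (- \<beta> 1)"
    using sums_single[of 0 "\<lambda>_. - \<beta> 1"] by simp
  then show ?thesis
    unfolding VA_def E_def by (rule sums_unique[symmetric])
qed

lemma VA_star_ge_reveal:
  assumes "\<forall>q\<in>{1/2..1}. 0 \<le> \<beta> q" and "mono_on {1/2..1} \<beta>" and "0 \<le> C"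
    and "0 \<le> \<delta>" and "\<delta> < 1" and "\<beta> (1/2) = 0" and "0 < b" and "b < 1"
  shows "- \<beta> 1 \<le> VA_star \<beta> C \<delta> b"
proof -
  have "bdd_above ((\<lambda>pol. VA \<beta> C \<delta> pol b) ` {pol. is_policy pol})"
    using VA_nonpos[OF assms(1-3) _ _ assms(4,5)] assms(7,8) by (intro bdd_aboveI2[where M = 0]) auto
  then have "VA \<beta> C \<delta> (reveal_policy b) b \<le> VA_star \<beta> C \<delta> b"
    unfolding VA_star_def by (rule cSUP_upper[rotated]) (simp add: is_policy_reveal_policy)
  then show ?thesis using VA_reveal_policy[where \<beta> = \<beta>, OF assms(7,8,6)] by simp
qed

lemma precision_cost_chord:
  assumes "concave_on {1/2..1} \<beta>" and "\<forall>q\<in>{1/2..1}. 0 \<le> \<beta> q"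
    and "0 \<le> m" and "m \<le> 1/2" and "q \<in> {1 - m..1}"
  shows "(q - (1 - m)) * \<beta> 1 \<le> m * \<beta> q"
proof -
  have sub: "{1 - m..1} \<subseteq> {1/2..1::real}" using assms(4) by auto
  have "concave_on {1 - m..1} \<beta>"
    unfolding concave_on_def
    by (rule convex_on_subset[OF assms(1)[unfolded concave_on_def] sub]) simp
  moreover have "0 \<le> \<beta> (1 - m)"
    using assms(2-4) by simp
  ultimately show ?thesis
    using concave_on_Icc_nonneg_chord[OF _ _ assms(5)] by simp
qed

lemma rA_less_neg_beta_one:
  assumes "concave_on {1/2..1} \<beta>" and "\<forall>q\<in>{1/2..1}. 0 \<le> \<beta> q"
    and "b \<in> {0..1}" and "q \<in> {1/2..<1}" and "\<beta> 1 < C * min b (1 - b)"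
  shows "rA \<beta> C b q < - \<beta> 1"
proof -
  define m where "m = min b (1 - b)"
  have m: "0 \<le> m" "m \<le> 1/2" using assms(3) by (auto simp: m_def min_def)
  have "0 \<le> \<beta> q" using assms(2,4) by simp
  show ?thesis
  proof (cases "m \<le> 1 - q")
    case True
    then show ?thesis
      using assms(5) \<open>0 \<le> \<beta> q\<close> by (simp add: rA_eq m_def[symmetric])
  next
    case False
    have "(q - (1 - m)) * \<beta> 1 \<le> m * \<beta> q"
      using precision_cost_chord[OF assms(1,2) m] False assms(4) by simp
    moreover have "(1 - q) * \<beta> 1 < (1 - q) * (C * m)"
      using assms(4,5) by (simp add: m_def)
    ultimately have "m * \<beta> 1 < m * (\<beta> q + C * (1 - q))"
      by (simp add: algebra_simps)
    moreover have "0 < m" using False assms(4) by simp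
    ultimately have "\<beta> 1 < \<beta> q + C * (1 - q)"
      by (simp add: mult_less_cancel_left_pos)
    then show ?thesis
      using False by (simp add: rA_eq m_def[symmetric])
  qed
qed

lemma rA_le_neg_min:
  assumes "concave_on {1/2..1} \<beta>" and "\<forall>q\<in>{1/2..1}. 0 \<le> \<beta> q"
    and "b \<in> {0..1}" and "q \<in> {1/2..1}"
  shows "rA \<beta> C b q \<le> - min (\<beta> 1) (C * min b (1 - b))"
proof -
  define m where "m = min b (1 - b)"
  have m: "0 \<le> m" "m \<le> 1/2" using assms(3) by (auto simp: m_def min_def)
  show ?thesis
  proof (cases "\<beta> 1 < C * m")
    case True
    have "rA \<beta> C b q \<le> - \<beta> 1"
    proof (cases "q = 1")
      case True
      then show ?thesis using m(1) by (simp add: rA_eq m_def[symmetric])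
    next
      case False
      then have "q \<in> {1/2..<1}" using assms(4) by simp
      then have "rA \<beta> C b q < - \<beta> 1"
        using rA_less_neg_beta_one[OF assms(1,2,3)] \<open>\<beta> 1 < C * m\<close> by (simp add: m_def)
      then show ?thesis by simp
    qed
    then show ?thesis by (simp add: m_def[symmetric])
  next
    case False
    have "rA \<beta> C b q \<le> - C * m"
    proof (cases "m \<le> 1 - q")
      case True
      then show ?thesis
        using assms(2,4) by (simp add: rA_eq m_def[symmetric])
    next
      case False
      have "(q - (1 - m)) * (C * m) \<le> (q - (1 - m)) * \<beta> 1"
        using \<open>\<not> \<beta> 1 < C * m\<close> False by (intro mult_left_mono) auto
      also have "\<dots> \<le> m * \<beta> q"
        using precision_cost_chord[OF assms(1,2) m] False assms(4) by simp
      finally have "m * ((q - (1 - m)) * C) \<le> m * \<beta> q"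
        by (simp add: algebra_simps)
      moreover have "0 < m" using False assms(4) by simp
      ultimately have "(q - (1 - m)) * C \<le> \<beta> q"
        by (simp add: mult_le_cancel_left_pos)
      then show ?thesis
        using False by (simp add: rA_eq m_def[symmetric] algebra_simps)
    qed
    then show ?thesis by (simp add: m_def[symmetric])
  qed
qed

definition myopic_policy :: "(real \<Rightarrow> real) \<Rightarrow> real \<Rightarrow> real \<Rightarrow> real" where
  "myopic_policy \<beta> C b = (if \<beta> 1 < C * min b (1 - b) then 1 else 1/2)"

lemma rA_myopic_policy:
  assumes "\<beta> (1/2) = 0" and "b \<in> {0..1}"
  shows "rA \<beta> C b (myopic_policy \<beta> C b) = - min (\<beta> 1) (C * min b (1 - b))"
proof -
  have "0 \<le> min b (1 - b)" and "min b (1 - b) \<le> 1/2"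
    using assms(2) by (auto simp: min_def)
  then show ?thesis
    using assms(1) by (auto simp: myopic_policy_def rA_eq)
qed

lemma myopic_optimal_policy_myopic_policy:
  assumes "concave_on {1/2..1} \<beta>" and "\<forall>q\<in>{1/2..1}. 0 \<le> \<beta> q" and "\<beta> (1/2) = 0"
  shows "myopic_optimal_policy \<beta> C (myopic_policy \<beta> C)"
  unfolding myopic_optimal_policy_def is_policy_def
  using rA_le_neg_min[OF assms(1,2)] rA_myopic_policy[where \<beta> = \<beta>, OF assms(3)]
  by (auto simp: myopic_policy_def)

lemma optimal_policy_full_precision:
  assumes "concave_on {1/2..1} \<beta>" and "\<forall>q\<in>{1/2..1}. 0 \<le> \<beta> q"
    and "mono_on {1/2..1} \<beta>" and "0 < C" and "0 \<le> \<delta>" and "\<delta> < 1" and "\<beta> (1/2) = 0"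
    and "optimal_policy \<beta> C \<delta> pol" and "b \<in> {0..1}" and "\<beta> 1 < C * min b (1 - b)"
  shows "pol b = 1"
proof (rule ccontr)
  assume "pol b \<noteq> 1"
  have pol: "is_policy pol" using assms(8) by (simp add: optimal_policy_def)
  then have "pol b \<in> {1/2..1}"
    using assms(9) by (simp add: is_policy_def)
  with \<open>pol b \<noteq> 1\<close> have "pol b \<in> {1/2..<1}" by simp
  have "0 \<le> \<beta> 1" using assms(2) by simp
  with assms(10) have "0 < C * min b (1 - b)" by linarith
  then have "0 < min b (1 - b)" using assms(4) by (simp add: zero_less_mult_iff)
  then have "0 < b" and "b < 1" by auto
  have "VA_star \<beta> C \<delta> b = VA \<beta> C \<delta> pol b"
    using assms(8,9) by (simp add: optimal_policy_def)
  also have "\<dots> \<le> rA \<beta> C b (pol b)"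
    using VA_le_first_reward[OF assms(2,3) _ pol assms(9,5,6)] assms(4) by simp
  also have "\<dots> < - \<beta> 1"
    by (rule rA_less_neg_beta_one[OF assms(1,2,9) \<open>pol b \<in> {1/2..<1}\<close> assms(10)])
  also have "\<dots> \<le> VA_star \<beta> C \<delta> b"
    using VA_star_ge_reveal[OF assms(2,3) _ assms(5-7) \<open>0 < b\<close> \<open>b < 1\<close>] assms(4) by simp
  finally show False by simp
qed

theorem lemma9:
  fixes \<beta> :: "real \<Rightarrow> real" and C p \<delta> :: real
  assumes "C > 0"
    and "1/2 \<le> p" and "p < 1"
    and "0 \<le> \<delta>" and "\<delta> < 1"
    and "\<forall>q\<in>{1/2..1}. 0 \<le> \<beta> q"
    and "mono_on {1/2..1} \<beta>"
    and "continuous_on {1/2..1} \<beta>"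
    and "concave_on {1/2..1} \<beta>"
    and "\<beta> p = 0"
  shows "\<exists>pol0. myopic_optimal_policy \<beta> C pol0 \<and>
           (\<forall>pols. optimal_policy \<beta> C \<delta> pols \<longrightarrow> (\<forall>b\<in>{0..1}. pol0 b \<le> pols b))"
proof (intro exI conjI allI impI ballI)
  have "\<beta> (1/2) \<le> \<beta> p" using assms(2,3,7) by (auto intro: mono_onD)
  moreover have "0 \<le> \<beta> (1/2)" using assms(6) by simp
  ultimately have half: "\<beta> (1/2) = 0" using assms(10) by simp
  show "myopic_optimal_policy \<beta> C (myopic_policy \<beta> C)"
    by (rule myopic_optimal_policy_myopic_policy[OF assms(9,6) half])
  fix pol and b :: real assume opt: "optimal_policy \<beta> C \<delta> pol" and b: "b \<in> {0..1}"
  show "myopic_policy \<beta> C b \<le> pol b"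
  proof (cases "\<beta> 1 < C * min b (1 - b)")
    case True
    then show ?thesis
      using optimal_policy_full_precision[OF assms(9,6,7,1,4,5) half opt b] by (simp add: myopic_policy_def)
  next
    case False
    then show ?thesis
      using opt b by (auto simp: myopic_policy_def optimal_policy_def is_policy_def)
  qed
qed

end
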